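(* Let $k\ge1$ be an integer and assume conditions $\mathbf A_1$ and $\mathbf A_2$ (stated in the context). Then for every $p>0$ and every $\delta>0$, $$\lim_{n\to\infty}n^p\max_{0\le l\le k-1}\mathbf P\big(\|S_{\vartheta,n}^{(l)}\|>\delta\big)=0.$$
   Context: $\|f\|^2=\int_0^1f^2(x)dx$. Fix $\eta>0$ and a kernel $V\in C^\infty(\mathbb R)$ with $V(u)=0$ for $|u|\ge1$ and $\int_{-1}^1V=1$; set $I_\eta(x)=\eta^{-1}\int_{\mathbb R}\mathbf 1_{\{|u|\le1-\eta\}}V((u-x)/\eta)du$. Let $e_1=1/\sqrt2$, $e_j(x)=\mathrm{Tr}_j(\pi[j/2]x)$ for $j\ge2$ ($\mathrm{Tr}_j=\cos$ for even $j$, $\sin$ for odd $j$). Given sequences $h_n>0$, $N_n\in\mathbb N$, put $M_n=[1/(2h_n)]-1$, $\tilde x_m=2mh_n$, $v_m(x)=(x-\tilde x_m)/h_n$, $D_{m,j}(x)=e_j(v_m(x))I_\eta(v_m(x))$, and for an array $z=(z_{m,j})_{1\le m\le M_n,1\le j\le N_n}$, $S_{z,n}(x)=\sum_{m=1}^{M_n}\sum_{j=1}^{N_n}z_{m,j}D_{m,j}(x)$. The random array $\vartheta$ has entries $\vartheta_{m,j}=t_{m,j}\zeta_{m,j}$, with $(\zeta_{m,j})$ i.i.d. $\mathcal N(0,1)$ and $t_{m,j}>0$ nonrandom; $t_n^*=\max_{1\le m\le M_n}\sum_{j=1}^{N_n}t_{m,j}$. $\mathbf A_1$: $N_n\to\infty$,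 $N_n^p/n\to0$ for every $p>0$, and there are $0<\delta_1<1$, $\delta_2>0$ with $h_n=O(n^{-\delta_1})$ and $h_n^{-1}=O(n^{\delta_2})$. $\mathbf A_2$: there are $d_n>0$ with $\lim_n\frac{d_n}{h_n^{2k-1}}\sum_{m=1}^{M_n}\sum_{j=1}^{N_n}t_{m,j}^2j^{2(k-1)}=0$, $\lim_n\sqrt{d_n}\,t_n^*=0$, and $\lim_nn^pe^{-d_n/2}=0$ for every $p>0$. *)

theory Defs
  imports "HOL-Analysis.Analysis" "HOL-Probability.Probability"
begin

definition smooth_real :: "(real \<Rightarrow> real) \<Rightarrow> bool" where
  "smooth_real f \<longleftrightarrow> (\<forall>n x. ((deriv ^^ n) f) differentiable (at x))"

definition L2norm01 :: "(real \<Rightarrow> real) \<Rightarrow> real" where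
  "L2norm01 f = sqrt (integral {0..1} (\<lambda>x. (f x)^2))"

definition I_eta :: "real \<Rightarrow> (real \<Rightarrow> real) \<Rightarrow> real \<Rightarrow> real" where
  "I_eta \<eta> V x = integral UNIV (\<lambda>u. indicator {u. \<bar>u\<bar> \<le> 1 - \<eta>} u * V ((u - x) / \<eta>)) / \<eta>"

definition e_basis :: "nat \<Rightarrow> real \<Rightarrow> real" where
  "e_basis j x = (if j = 1 then 1 / sqrt 2
                  else if even j then cos (pi * real (j div 2) * x)
                  else sin (pi * real (j div 2) * x))"

(* M_n = [1/(2 h_n)] - 1 (taken as 0 if negative) *)
definition M_of :: "real \<Rightarrow> nat" where
  "M_of h = nat (\<lfloor>1 / (2 * h)\<rfloor> - 1)"

definition D_fun :: "real \<Rightarrow> (real \<Rightarrow> real) \<Rightarrow> real \<Rightarrow> nat \<Rightarrow> nat \<Rightarrow> real \<Rightarrow> real" where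
  "D_fun \<eta> V h m j x =
     (let v = (x - 2 * real m * h) / h in e_basis j v * I_eta \<eta> V v)"

definition S_fun :: "real \<Rightarrow> (real \<Rightarrow> real) \<Rightarrow> real \<Rightarrow> nat \<Rightarrow> (nat \<Rightarrow> nat \<Rightarrow> real) \<Rightarrow> real \<Rightarrow> real" where
  "S_fun \<eta> V h N z x = (\<Sum>m=1..M_of h. \<Sum>j=1..N. z m j * D_fun \<eta> V h m j x)"

(* t_n^* = max_m \<Sum>_j t_{m,j}; convention 0 when M_n = 0 *)
definition t_star :: "nat \<Rightarrow> nat \<Rightarrow> (nat \<Rightarrow> nat \<Rightarrow> real) \<Rightarrow> real" where
  "t_star M N t = Max (insert 0 {(\<Sum>j=1..N. t m j) | m. m \<in> {1..M}})"

end

theory Submission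
  imports Defs
begin

(* Each D_{m,j}^(l) is bounded by a constant times (j/h)^l: use the Leibniz rule
   for e_j * I_eta, where all derivatives of I_eta are bounded because V has compact support.
   Hence S^(l) is a centred Gaussian field on [0,1] whose pointwise variance is at most
   s = C h^(1-2k) sum t_{m,j}^2 j^(2(k-1)). A centred Gaussian Y with Var Y <= s satisfies
   E exp(Y^2/(4s)) <= sqrt 2; Jensen and Tonelli lift this to E exp(||S^(l)||^2/(4s)) <= sqrt 2,
   and Markov gives P(||S^(l)|| > delta) <= sqrt 2 exp(-delta^2/(4s)). By A2, s_n can be chosen
   with d_n s_n -> 0, so the bound is eventually sqrt 2 exp(-d_n/2) = o(n^-p). *)

lemma sum_choose_Pascal_step:
  fixes a b :: "nat \<Rightarrow> real"
  shows "(\<Sum>i\<le>n. real (n choose i) * (a (Suc i) * b (n - i) + a i * b (Suc n - i))) =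
         (\<Sum>i\<le>Suc n. real (Suc n choose i) * a i * b (Suc n - i))"
proof -
  have "(\<Sum>i\<le>Suc n. real (Suc n choose i) * a i * b (Suc n - i)) =
     a 0 * b (Suc n) + (\<Sum>i\<le>n. real (Suc n choose Suc i) * a (Suc i) * b (n - i))"
    by (simp add: sum.atMost_Suc_shift del: sum.atMost_Suc)
  also have "\<dots> = (\<Sum>i\<le>n. real (n choose i) * a (Suc i) * b (n - i))
        + (a 0 * b (Suc n) + (\<Sum>i\<le>n. real (n choose Suc i) * a (Suc i) * b (n - i)))"
    by (simp add: sum.distrib algebra_simps)
  also have "a 0 * b (Suc n) + (\<Sum>i\<le>n. real (n choose Suc i) * a (Suc i) * b (n - i))
      = (\<Sum>i\<le>n. real (n choose i) * a i * b (Suc n - i))"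
  proof -
    have "(\<Sum>i\<le>n. real (n choose i) * a i * b (Suc n - i))
        = (\<Sum>i\<le>Suc n. real (n choose i) * a i * b (Suc n - i))"
      by simp
    then show ?thesis by (simp add: sum.atMost_Suc_shift del: sum.atMost_Suc)
  qed
  finally show ?thesis by (simp add: sum.distrib algebra_simps)
qed

lemma smooth_real_has_derivative:
  "smooth_real f \<Longrightarrow> ((deriv ^^ n) f has_real_derivative deriv ((deriv ^^ n) f) x) (at x)"
  unfolding smooth_real_def by (simp add: DERIV_deriv_iff_real_differentiable)

lemma smooth_realI:
  assumes "\<And>n x. ((deriv ^^ n) f has_real_derivative D n x) (at x)"
  shows "smooth_real f"
  unfolding smooth_real_def real_differentiable_def using assms by blast

lemma deriv_eq_fun:
  "(\<And>x. (f has_real_derivative f' x) (at x)) \<Longrightarrow> deriv f = f'"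
  by (rule ext) (rule DERIV_imp_deriv)

lemma smooth_real_derivn: "smooth_real f \<Longrightarrow> smooth_real ((deriv ^^ n) f)"
  unfolding smooth_real_def by (metis funpow_add o_apply)

lemma smooth_real_continuous_on: "smooth_real f \<Longrightarrow> continuous_on S ((deriv ^^ n) f)"
  by (meson DERIV_isCont continuous_at_imp_continuous_on smooth_real_has_derivative)

lemma derivn_cmult:
  assumes f: "smooth_real f"
  shows "(deriv ^^ n) (\<lambda>x. c * f x) = (\<lambda>x. c * (deriv ^^ n) f x)"
proof (induction n)
  case (Suc n)
  show ?case
    using Suc.IH by (auto intro!: deriv_eq_fun DERIV_cmult smooth_real_has_derivative f)
qed simp

lemma derivn_sum:
  assumes I: "finite I" and f: "\<And>i. i \<in> I \<Longrightarrow> smooth_real (f i)"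
  shows "(deriv ^^ n) (\<lambda>x. \<Sum>i\<in>I. f i x) = (\<lambda>x. \<Sum>i\<in>I. (deriv ^^ n) (f i) x)"
proof (induction n)
  case (Suc n)
  show ?case
    using Suc.IH by (auto intro!: deriv_eq_fun DERIV_sum smooth_real_has_derivative f)
qed simp

lemma has_real_derivative_scaled_derivn_affine:
  assumes f: "smooth_real f"
  shows "((\<lambda>x. a ^ n * (deriv ^^ n) f (a * x + b)) has_real_derivative
      a ^ Suc n * (deriv ^^ Suc n) f (a * x + b)) (at x)"
proof -
  have "((\<lambda>x. (deriv ^^ n) f (a * x + b)) has_real_derivative
      deriv ((deriv ^^ n) f) (a * x + b) * a) (at x)"
    by (rule DERIV_chain2[OF smooth_real_has_derivative[OF f]]) (auto intro!: derivative_eq_intros)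
  then show ?thesis using DERIV_cmult by (fastforce simp: mult_ac)
qed

lemma derivn_affine:
  assumes f: "smooth_real f"
  shows "(deriv ^^ n) (\<lambda>x. f (a * x + b)) = (\<lambda>x. a ^ n * (deriv ^^ n) f (a * x + b))"
proof (induction n)
  case (Suc n)
  show ?case
    using Suc.IH deriv_eq_fun[OF has_real_derivative_scaled_derivn_affine[OF f]] by simp
qed simp

lemma smooth_real_affine: "smooth_real f \<Longrightarrow> smooth_real (\<lambda>x. f (a * x + b))"
  by (rule smooth_realI) (auto simp: derivn_affine intro: has_real_derivative_scaled_derivn_affine)

lemma smooth_real_cmult: "smooth_real f \<Longrightarrow> smooth_real (\<lambda>x. c * f x)"
  by (rule smooth_realI) (auto simp: derivn_cmult intro: DERIV_cmult smooth_real_has_derivative)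

lemma has_real_derivative_Leibniz_sum:
  assumes f: "smooth_real f" and g: "smooth_real g"
  shows "((\<lambda>x. \<Sum>i\<le>n. real (n choose i) * (deriv ^^ i) f x * (deriv ^^ (n - i)) g x)
      has_real_derivative
      (\<Sum>i\<le>Suc n. real (Suc n choose i) * (deriv ^^ i) f x * (deriv ^^ (Suc n - i)) g x)) (at x)"
proof -
  have "((\<lambda>x. \<Sum>i\<le>n. real (n choose i) * (deriv ^^ i) f x * (deriv ^^ (n - i)) g x)
      has_real_derivative
      (\<Sum>i\<le>n. real (n choose i) * ((deriv ^^ Suc i) f x * (deriv ^^ (n - i)) g x
         + (deriv ^^ i) f x * (deriv ^^ (Suc n - i)) g x))) (at x)"
    by (auto intro!: DERIV_sum DERIV_cmult DERIV_mult[THEN DERIV_cong]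
        smooth_real_has_derivative f g simp: Suc_diff_le algebra_simps)
  then show ?thesis
    by (simp only: sum_choose_Pascal_step[of n "\<lambda>i. (deriv ^^ i) f x" "\<lambda>i. (deriv ^^ i) g x"] mult.assoc)
qed

lemma derivn_mult:
  assumes f: "smooth_real f" and g: "smooth_real g"
  shows "(deriv ^^ n) (\<lambda>x. f x * g x) =
    (\<lambda>x. \<Sum>i\<le>n. real (n choose i) * (deriv ^^ i) f x * (deriv ^^ (n - i)) g x)"
proof (induction n)
  case (Suc n)
  show ?case
    using Suc.IH deriv_eq_fun[OF has_real_derivative_Leibniz_sum[OF f g]] by simp
qed simp

lemma smooth_real_mult: "smooth_real f \<Longrightarrow> smooth_real g \<Longrightarrow> smooth_real (\<lambda>x. f x * g x)"
  by (rule smooth_realI) (auto simp: derivn_mult intro: has_real_derivative_Leibniz_sum)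

lemma derivn_mult_bound:
  assumes f: "smooth_real f" and g: "smooth_real g"
    and "\<And>i. i \<le> n \<Longrightarrow> \<bar>(deriv ^^ i) f x\<bar> \<le> A * a ^ i"
    and "\<And>i. i \<le> n \<Longrightarrow> \<bar>(deriv ^^ i) g x\<bar> \<le> B * b ^ i"
  shows "\<bar>(deriv ^^ n) (\<lambda>x. f x * g x) x\<bar> \<le> A * B * (a + b) ^ n"
proof -
  have "\<bar>(deriv ^^ n) (\<lambda>x. f x * g x) x\<bar>
      \<le> (\<Sum>i\<le>n. real (n choose i) * \<bar>(deriv ^^ i) f x\<bar> * \<bar>(deriv ^^ (n - i)) g x\<bar>)"
    unfolding derivn_mult[OF f g] by (rule order_trans[OF sum_abs]) (simp add: abs_mult)
  also have "\<dots> \<le> (\<Sum>i\<le>n. real (n choose i) * (A * a ^ i) * (B * b ^ (n - i)))"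
  proof (intro sum_mono mult_mono mult_left_mono)
    fix i assume "i \<in> {..n}"
    then show "\<bar>(deriv ^^ i) f x\<bar> \<le> A * a ^ i" "\<bar>(deriv ^^ (n - i)) g x\<bar> \<le> B * b ^ (n - i)"
      "0 \<le> real (n choose i) * (A * a ^ i)"
      using assms(3)[of i] assms(4)[of "n - i"] by (auto intro: order_trans[OF abs_ge_zero])
  qed auto
  also have "\<dots> = A * B * (a + b) ^ n"
    by (simp add: binomial_ring sum_distrib_left atLeast0AtMost mult_ac)
  finally show ?thesis .
qed

definition trig_wave :: "real \<Rightarrow> real \<Rightarrow> real \<Rightarrow> real \<Rightarrow> real" where
  "trig_wave \<alpha> \<beta> a x = \<alpha> * cos (a * x) + \<beta> * sin (a * x)"

lemma has_real_derivative_trig_wave: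
  "(trig_wave \<alpha> \<beta> a has_real_derivative trig_wave (a * \<beta>) (- (a * \<alpha>)) a x) (at x)"
  unfolding trig_wave_def by (auto intro!: derivative_eq_intros simp: algebra_simps)

lemma derivn_trig_wave:
  "\<exists>\<alpha>' \<beta>'. (deriv ^^ n) (trig_wave \<alpha> \<beta> a) = trig_wave \<alpha>' \<beta>' a \<and>
     \<bar>\<alpha>'\<bar> + \<bar>\<beta>'\<bar> \<le> \<bar>a\<bar> ^ n * (\<bar>\<alpha>\<bar> + \<bar>\<beta>\<bar>)"
proof (induction n)
  case (Suc n)
  then obtain \<alpha>' \<beta>' where IH: "(deriv ^^ n) (trig_wave \<alpha> \<beta> a) = trig_wave \<alpha>' \<beta>' a"
    "\<bar>\<alpha>'\<bar> + \<bar>\<beta>'\<bar> \<le> \<bar>a\<bar> ^ n * (\<bar>\<alpha>\<bar> + \<bar>\<beta>\<bar>)"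
    by blast
  have "(deriv ^^ Suc n) (trig_wave \<alpha> \<beta> a) = trig_wave (a * \<beta>') (- (a * \<alpha>')) a"
    using IH(1) deriv_eq_fun[OF has_real_derivative_trig_wave] by simp
  moreover have "\<bar>a * \<beta>'\<bar> + \<bar>- (a * \<alpha>')\<bar> \<le> \<bar>a\<bar> ^ Suc n * (\<bar>\<alpha>\<bar> + \<bar>\<beta>\<bar>)"
    using mult_left_mono[OF IH(2), of "\<bar>a\<bar>"] by (simp add: abs_mult algebra_simps)
  ultimately show ?case by blast
qed auto

lemma abs_trig_wave_le: "\<bar>trig_wave \<alpha> \<beta> a x\<bar> \<le> \<bar>\<alpha>\<bar> + \<bar>\<beta>\<bar>"
proof -
  have "\<bar>\<alpha> * cos (a * x)\<bar> \<le> \<bar>\<alpha>\<bar>" "\<bar>\<beta> * sin (a * x)\<bar> \<le> \<bar>\<beta>\<bar>"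
    by (auto simp: abs_mult intro: mult_left_le)
  then show ?thesis unfolding trig_wave_def by linarith
qed

lemma smooth_real_trig_wave: "smooth_real (trig_wave \<alpha> \<beta> a)"
  unfolding smooth_real_def real_differentiable_def
  by (metis derivn_trig_wave has_real_derivative_trig_wave)

lemma e_basis_eq_trig_wave:
  "e_basis j = trig_wave (if j = 1 then 1 / sqrt 2 else if even j then 1 else 0)
     (if j = 1 then 0 else if even j then 0 else 1) (if j = 1 then 0 else pi * real (j div 2))"
  by (rule ext) (auto simp: e_basis_def trig_wave_def)

lemma smooth_real_e_basis: "smooth_real (e_basis j)"
  unfolding e_basis_eq_trig_wave by (rule smooth_real_trig_wave)

lemma derivn_e_basis_bound:
  assumes "j \<ge> 1"
  shows "\<bar>(deriv ^^ n) (e_basis j) x\<bar> \<le> (pi * real j) ^ n"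
proof -
  obtain \<alpha> \<beta> a where e: "e_basis j = trig_wave \<alpha> \<beta> a"
    and \<alpha>\<beta>: "\<bar>\<alpha>\<bar> + \<bar>\<beta>\<bar> \<le> 1" and a: "\<bar>a\<bar> \<le> pi * real j"
  proof
    show "\<bar>if j = 1 then 1 / sqrt 2 else if even j then 1 else 0\<bar> +
          \<bar>if j = 1 then 0 else if even j then 0 else 1\<bar> \<le> (1::real)"
      by (auto simp: real_le_rsqrt)
    have "pi * real (j div 2) \<le> pi * real j" by (intro mult_left_mono) auto
    then show "\<bar>if j = 1 then 0 else pi * real (j div 2)\<bar> \<le> pi * real j"
      using assms by auto
  qed (rule e_basis_eq_trig_wave)
  obtain \<alpha>' \<beta>' where "(deriv ^^ n) (e_basis j) = trig_wave \<alpha>' \<beta>' a"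
    and "\<bar>\<alpha>'\<bar> + \<bar>\<beta>'\<bar> \<le> \<bar>a\<bar> ^ n * (\<bar>\<alpha>\<bar> + \<bar>\<beta>\<bar>)"
    unfolding e using derivn_trig_wave by blast
  then have "\<bar>(deriv ^^ n) (e_basis j) x\<bar> \<le> \<bar>a\<bar> ^ n * (\<bar>\<alpha>\<bar> + \<bar>\<beta>\<bar>)"
    using abs_trig_wave_le order_trans by metis
  also have "\<dots> \<le> (pi * real j) ^ n * 1"
    by (intro mult_mono power_mono a \<alpha>\<beta>) auto
  finally show ?thesis by simp
qed

lemma derivn_eq_0_outside:
  assumes V: "smooth_real V" "\<And>u. \<bar>u\<bar> \<ge> 1 \<Longrightarrow> V u = 0" and u: "\<bar>u\<bar> > 1"
  shows "(deriv ^^ n) V u = 0"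
  using u
proof (induction n arbitrary: u)
  case (Suc n)
  have "((deriv ^^ n) V has_real_derivative 0) (at u)"
    by (rule has_field_derivative_transform_within_open[where f="\<lambda>_. 0" and S="{u. 1 < \<bar>u\<bar>}"])
      (auto intro!: open_Collect_less continuous_intros simp: Suc)
  then show ?case by (simp add: DERIV_imp_deriv)
qed (use V in auto)

lemma derivn_bounded_if_compact_support:
  assumes V: "smooth_real V" "\<And>u. \<bar>u\<bar> \<ge> 1 \<Longrightarrow> V u = 0"
  obtains K where "\<And>u. \<bar>(deriv ^^ n) V u\<bar> \<le> K"
proof -
  have "bounded ((deriv ^^ n) V ` {-1..1})"
    by (intro compact_imp_bounded compact_continuous_image smooth_real_continuous_on V) auto
  then obtain K where K: "\<forall>y\<in>(deriv ^^ n) V ` {-1..1}. norm y \<le> K"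
    unfolding bounded_iff by blast
  have "\<bar>(deriv ^^ n) V u\<bar> \<le> max K 0" for u
  proof (cases "\<bar>u\<bar> > 1")
    case False
    then have "u \<in> {-1..1}" by auto
    with K have "\<bar>(deriv ^^ n) V u\<bar> \<le> K" by auto
    then show ?thesis by simp
  qed (simp add: derivn_eq_0_outside[OF V])
  then show thesis by (rule that)
qed

lemma I_eta_eq_integral:
  "I_eta \<eta> V v = integral {-(1-\<eta>)..1-\<eta>} (\<lambda>u. V ((u - v) / \<eta>)) / \<eta>"
proof -
  have s: "{u. \<bar>u\<bar> \<le> 1 - \<eta>} = {-(1-\<eta>)..1-\<eta>}" by auto
  have eq: "(\<lambda>u. indicator {u. \<bar>u\<bar> \<le> 1 - \<eta>} u * V ((u - v) / \<eta>)) =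
      (\<lambda>u. if u \<in> {-(1-\<eta>)..1-\<eta>} then V ((u - v) / \<eta>) else 0)"
    unfolding s by (auto simp: indicator_def)
  show ?thesis unfolding I_eta_def eq integral_restrict_UNIV ..
qed

lemma has_real_derivative_integral_rescaled:
  assumes W: "smooth_real W" and "\<eta> \<noteq> 0"
  shows "((\<lambda>v. integral {a..b} (\<lambda>u. W ((u - v) / \<eta>))) has_real_derivative
      (- 1 / \<eta>) * integral {a..b} (\<lambda>u. deriv W ((u - v) / \<eta>))) (at v)"
proof -
  have cW: "continuous_on S W" and cW': "continuous_on S (deriv W)" for S
    using smooth_real_continuous_on[OF W, of _ 0] smooth_real_continuous_on[OF W, of _ 1] by auto
  have "((\<lambda>v. integral (cbox a b) (\<lambda>u. W ((u - v) / \<eta>))) has_real_derivative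
      integral (cbox a b) (\<lambda>u. deriv W ((u - v) / \<eta>) * (- 1 / \<eta>))) (at v within UNIV)"
  proof (rule leibniz_rule_field_derivative)
    fix x u :: real
    show "((\<lambda>x. W ((u - x) / \<eta>)) has_real_derivative deriv W ((u - x) / \<eta>) * (- 1 / \<eta>))
        (at x within UNIV)"
    proof -
      have "((\<lambda>x. (u - x) / \<eta>) has_real_derivative - 1 / \<eta>) (at x)"
        using assms(2) by (auto intro!: derivative_eq_intros simp: divide_simps)
      from DERIV_chain2[OF smooth_real_has_derivative[OF W, of 0] this] show ?thesis by simp
    qed
  next
    fix x :: real
    show "(\<lambda>u. W ((u - x) / \<eta>)) integrable_on cbox a b"
      unfolding cbox_interval
      by (intro integrable_continuous_interval continuous_intros continuous_on_compose2[OF cW])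
        (use assms(2) in auto)
  next
    show "continuous_on (UNIV \<times> cbox a b) (\<lambda>(x, u). deriv W ((u - x) / \<eta>) * (- 1 / \<eta>))"
      unfolding case_prod_beta
      by (intro continuous_intros continuous_on_compose2[OF cW']) (use assms(2) in auto)
  qed auto
  then show ?thesis
    by (simp add: cbox_interval integral_mult_left[symmetric] mult.commute del: integral_mult_left)
qed

lemma has_real_derivative_derivn_I_eta_formula:
  assumes V: "smooth_real V" and "\<eta> \<noteq> 0"
  shows "((\<lambda>v. (- 1 / \<eta>) ^ n / \<eta> * integral {-(1-\<eta>)..1-\<eta>} (\<lambda>u. (deriv ^^ n) V ((u - v) / \<eta>)))
    has_real_derivative
    (- 1 / \<eta>) ^ Suc n / \<eta> * integral {-(1-\<eta>)..1-\<eta>} (\<lambda>u. (deriv ^^ Suc n) V ((u - v) / \<eta>))) (at v)"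
  using DERIV_cmult[OF has_real_derivative_integral_rescaled[OF smooth_real_derivn[OF V] assms(2)],
      of "(- 1 / \<eta>) ^ n / \<eta>"]
  by (simp add: mult_ac)

lemma derivn_I_eta:
  assumes V: "smooth_real V" and "\<eta> \<noteq> 0"
  shows "(deriv ^^ n) (I_eta \<eta> V) =
    (\<lambda>v. (- 1 / \<eta>) ^ n / \<eta> * integral {-(1-\<eta>)..1-\<eta>} (\<lambda>u. (deriv ^^ n) V ((u - v) / \<eta>)))"
proof (induction n)
  case 0 then show ?case by (simp add: I_eta_eq_integral[abs_def])
next
  case (Suc n)
  show ?case
    using Suc.IH deriv_eq_fun[OF has_real_derivative_derivn_I_eta_formula[OF assms]] by simp
qed

lemma smooth_real_I_eta:
  assumes "smooth_real V" and "\<eta> \<noteq> 0"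
  shows "smooth_real (I_eta \<eta> V)"
  unfolding smooth_real_def real_differentiable_def derivn_I_eta[OF assms]
  using has_real_derivative_derivn_I_eta_formula[OF assms] by fast

lemma derivn_I_eta_bounded:
  assumes V: "smooth_real V" "\<And>u. \<bar>u\<bar> \<ge> 1 \<Longrightarrow> V u = 0" and eta: "\<eta> > 0"
  obtains B where "\<And>v. \<bar>(deriv ^^ n) (I_eta \<eta> V) v\<bar> \<le> B"
proof -
  obtain K where K: "\<And>u. \<bar>(deriv ^^ n) V u\<bar> \<le> K"
    using derivn_bounded_if_compact_support[OF V] by blast
  have K0: "K \<ge> 0" using K[of 0] by linarith
  have "\<bar>integral {-(1-\<eta>)..1-\<eta>} (\<lambda>u. (deriv ^^ n) V ((u - v) / \<eta>))\<bar> \<le> K * 2" for v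
  proof -
    have "(\<lambda>u. (deriv ^^ n) V ((u - v) / \<eta>)) integrable_on cbox (-(1-\<eta>)) (1-\<eta>)"
      unfolding cbox_interval
      by (intro integrable_continuous_interval continuous_on_compose2[OF smooth_real_continuous_on[OF V(1)]]
          continuous_intros) (use eta in auto)
    then have "norm (integral (cbox (-(1-\<eta>)) (1-\<eta>)) (\<lambda>u. (deriv ^^ n) V ((u - v) / \<eta>)))
        \<le> K * Henstock_Kurzweil_Integration.content (cbox (-(1-\<eta>)) (1-\<eta>))"
      using K0 K by (intro has_integral_bound[OF K0 integrable_integral]) auto
    also have "\<dots> \<le> K * 2"
      using K0 eta by (intro mult_left_mono) auto
    finally show ?thesis by (simp add: cbox_interval)
  qed
  then have "\<bar>(deriv ^^ n) (I_eta \<eta> V) v\<bar> \<le> (1 / \<eta>) ^ n / \<eta> * (K * 2)" for v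
    unfolding derivn_I_eta[OF V(1) eta[THEN less_imp_neq, symmetric]] using eta
    by (simp add: abs_mult power_abs mult_left_mono divide_right_mono)
  then show thesis by (rule that)
qed

lemma uniform_bound_upto:
  fixes F :: "nat \<Rightarrow> 'a \<Rightarrow> real"
  assumes "\<And>i. \<exists>B. \<forall>x. \<bar>F i x\<bar> \<le> B"
  obtains B where "B \<ge> 0" "\<And>i x. i \<le> L \<Longrightarrow> \<bar>F i x\<bar> \<le> B"
proof -
  obtain K where K: "\<And>i x. \<bar>F i x\<bar> \<le> K i" using assms by metis
  have "\<bar>F i x\<bar> \<le> (\<Sum>i'\<le>L. \<bar>K i'\<bar>)" if "i \<le> L" for i x
    using K[of i x] member_le_sum[of i "{..L}" "\<lambda>i'. \<bar>K i'\<bar>"] that by force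
  moreover have "0 \<le> (\<Sum>i'\<le>L. \<bar>K i'\<bar>)" by (simp add: sum_nonneg)
  ultimately show thesis using that by blast
qed

definition D_profile :: "real \<Rightarrow> (real \<Rightarrow> real) \<Rightarrow> nat \<Rightarrow> real \<Rightarrow> real" where
  "D_profile \<eta> V j v = e_basis j v * I_eta \<eta> V v"

lemma D_fun_eq_profile:
  "h \<noteq> 0 \<Longrightarrow> D_fun \<eta> V h m j = (\<lambda>x. D_profile \<eta> V j ((1 / h) * x + (- 2 * real m)))"
  by (rule ext) (simp add: D_fun_def D_profile_def Let_def diff_divide_distrib)

lemma smooth_real_D_profile: "smooth_real V \<Longrightarrow> \<eta> \<noteq> 0 \<Longrightarrow> smooth_real (D_profile \<eta> V j)"
  unfolding D_profile_def[abs_def] by (intro smooth_real_mult smooth_real_e_basis smooth_real_I_eta)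

lemma smooth_real_D_fun: "smooth_real V \<Longrightarrow> \<eta> \<noteq> 0 \<Longrightarrow> h \<noteq> 0 \<Longrightarrow> smooth_real (D_fun \<eta> V h m j)"
  unfolding D_fun_eq_profile by (intro smooth_real_affine smooth_real_D_profile)

lemma derivn_D_fun_bound:
  assumes V: "smooth_real V" and eta: "\<eta> \<noteq> 0" and h: "h > 0" and j: "j \<ge> 1"
    and B: "\<And>i v. i \<le> l \<Longrightarrow> \<bar>(deriv ^^ i) (I_eta \<eta> V) v\<bar> \<le> B"
  shows "\<bar>(deriv ^^ l) (D_fun \<eta> V h m j) x\<bar> \<le> B * ((pi + 1) * real j / h) ^ l"
proof -
  have B0: "B \<ge> 0" using B[of 0 0] by linarith
  have "\<bar>(deriv ^^ l) (D_profile \<eta> V j) v\<bar> \<le> 1 * B * (pi * real j + 1) ^ l" for v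
    unfolding D_profile_def[abs_def]
    using derivn_e_basis_bound[OF j] B
    by (intro derivn_mult_bound smooth_real_e_basis smooth_real_I_eta V eta) auto
  also have "\<dots> \<le> B * ((pi + 1) * real j) ^ l"
  proof -
    have "pi * real j + 1 \<le> (pi + 1) * real j" using j by (simp add: algebra_simps)
    then show ?thesis using B0 by (simp add: mult_left_mono power_mono)
  qed
  finally have "\<bar>(1 / h) ^ l * (deriv ^^ l) (D_profile \<eta> V j) v\<bar> \<le> (1 / h) ^ l * (B * ((pi + 1) * real j) ^ l)"
    for v using h by (simp add: abs_mult mult_left_mono)
  then show ?thesis
    unfolding D_fun_eq_profile[OF h[THEN less_imp_neq, symmetric]]
      derivn_affine[OF smooth_real_D_profile[OF V eta]]
    by (simp add: power_divide power_mult_distrib field_simps)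
qed

lemma power_scaled_le:
  fixes c h :: real
  assumes c: "c \<ge> 1" and h: "0 < h" "h \<le> 1" and j: "j \<ge> 1" and l: "l < k"
  shows "(c * real j / h) ^ (2 * l) \<le> c ^ (2 * k) * (real j ^ (2 * (k - 1)) / h ^ (2 * k - 1))"
proof -
  have "c ^ (2 * l) \<le> c ^ (2 * k)" using c l by (intro power_increasing) auto
  moreover have "real j ^ (2 * l) \<le> real j ^ (2 * (k - 1))" using j l by (intro power_increasing) auto
  moreover have "h ^ (2 * k - 1) \<le> h ^ (2 * l)" using h l by (intro power_decreasing) auto
  ultimately have "c ^ (2 * l) * (real j ^ (2 * l) / h ^ (2 * l))
      \<le> c ^ (2 * k) * (real j ^ (2 * (k - 1)) / h ^ (2 * k - 1))"
    using c h by (intro mult_mono frac_le) auto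
  then show ?thesis by (simp add: power_divide power_mult_distrib)
qed

lemma derivn_D_fun_sq_bound:
  assumes V: "smooth_real V" "\<And>u. \<bar>u\<bar> \<ge> 1 \<Longrightarrow> V u = 0" and eta: "\<eta> > 0"
  obtains C where "C \<ge> 0"
    "\<And>h m j l x. 0 < h \<Longrightarrow> h \<le> 1 \<Longrightarrow> 1 \<le> j \<Longrightarrow> l < k \<Longrightarrow>
      ((deriv ^^ l) (D_fun \<eta> V h m j) x)\<^sup>2 \<le> C * (real j ^ (2 * (k - 1)) / h ^ (2 * k - 1))"
proof -
  have "\<exists>B. \<forall>v. \<bar>(deriv ^^ i) (I_eta \<eta> V) v\<bar> \<le> B" for i
    using derivn_I_eta_bounded[OF V eta] by blast
  then obtain B where B0: "B \<ge> 0" and B: "\<And>i v. i \<le> k \<Longrightarrow> \<bar>(deriv ^^ i) (I_eta \<eta> V) v\<bar> \<le> B"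
    by (rule uniform_bound_upto[where F="\<lambda>i. (deriv ^^ i) (I_eta \<eta> V)" and L=k]) blast
  have "((deriv ^^ l) (D_fun \<eta> V h m j) x)\<^sup>2
      \<le> B\<^sup>2 * (pi + 1) ^ (2 * k) * (real j ^ (2 * (k - 1)) / h ^ (2 * k - 1))"
    if h: "0 < h" "h \<le> 1" and j: "1 \<le> j" and l: "l < k" for h m j l x
  proof -
    have "\<bar>(deriv ^^ l) (D_fun \<eta> V h m j) x\<bar> \<le> B * ((pi + 1) * real j / h) ^ l"
      using l eta B by (intro derivn_D_fun_bound[OF V(1) _ h(1) j]) auto
    from power_mono[OF this abs_ge_zero, of 2]
    have "((deriv ^^ l) (D_fun \<eta> V h m j) x)\<^sup>2 \<le> (B * ((pi + 1) * real j / h) ^ l)\<^sup>2"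
      by simp
    also have "\<dots> = B\<^sup>2 * ((pi + 1) * real j / h) ^ (2 * l)"
      by (simp add: power_mult_distrib power_mult[symmetric] mult.commute)
    also have "\<dots> \<le> B\<^sup>2 * ((pi + 1) ^ (2 * k) * (real j ^ (2 * (k - 1)) / h ^ (2 * k - 1)))"
      using pi_gt3 by (intro mult_left_mono power_scaled_le h j l) auto
    finally show ?thesis by (simp add: mult.assoc)
  qed
  then show thesis by (intro that[of "B\<^sup>2 * (pi + 1) ^ (2 * k)"]) auto
qed

lemma nn_integral_normal_density: "\<sigma> > 0 \<Longrightarrow> (\<integral>\<^sup>+z. ennreal (normal_density \<mu> \<sigma> z) \<partial>lborel) = 1"
proof -
  assume "\<sigma> > 0"
  interpret p: prob_space "density lborel (normal_density \<mu> \<sigma>)"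
    using \<open>\<sigma> > 0\<close> by (rule prob_space_normal_density)
  have "emeasure (density lborel (normal_density \<mu> \<sigma>)) UNIV = 1"
    using p.emeasure_space_1 by simp
  then show ?thesis by (subst (asm) emeasure_density) auto
qed

lemma nn_integral_normal_density_exp_sq_le:
  assumes \<sigma>: "\<sigma> > 0" and l: "0 \<le> lam" "lam * \<sigma>\<^sup>2 \<le> 1/4"
  shows "(\<integral>\<^sup>+z. ennreal (normal_density 0 \<sigma> z) * ennreal (exp (lam * z\<^sup>2)) \<partial>lborel) \<le> ennreal (sqrt 2)"
proof -
  \<comment> \<open>The integrand is \<open>1 / sqrt r\<close> times the density of \<open>N(0, \<sigma>\<^sup>2 / r)\<close>.\<close>
  define r where "r = 1 - 2 * lam * \<sigma>\<^sup>2"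
  have r: "r \<ge> 1/2" unfolding r_def using l by simp
  define \<sigma>' where "\<sigma>' = \<sigma> / sqrt r"
  have s2: "\<sigma>'\<^sup>2 = \<sigma>\<^sup>2 / r" unfolding \<sigma>'_def using r by (simp add: power_divide)
  have pw: "normal_density 0 \<sigma> z * exp (lam * z\<^sup>2) = (1 / sqrt r) * normal_density 0 \<sigma>' z" for z
  proof -
    have e: "exp (-(z - 0)\<^sup>2 / (2 * \<sigma>'\<^sup>2)) = exp (-(z - 0)\<^sup>2 / (2 * \<sigma>\<^sup>2)) * exp (lam * z\<^sup>2)"
      unfolding exp_add[symmetric] s2 using r \<sigma> by (simp add: r_def field_simps)
    have q: "sqrt (2 * pi * \<sigma>'\<^sup>2) = sqrt (2 * pi * \<sigma>\<^sup>2) / sqrt r"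
      unfolding s2 by (simp add: real_sqrt_divide[symmetric])
    show ?thesis unfolding normal_density_def e q using r \<sigma> by (simp add: field_simps)
  qed
  have "(\<integral>\<^sup>+z. ennreal (normal_density 0 \<sigma> z) * ennreal (exp (lam * z\<^sup>2)) \<partial>lborel)
      = (\<integral>\<^sup>+z. ennreal (1 / sqrt r) * ennreal (normal_density 0 \<sigma>' z) \<partial>lborel)"
  proof (intro nn_integral_cong)
    fix z
    have "ennreal (normal_density 0 \<sigma> z) * ennreal (exp (lam * z\<^sup>2)) = ennreal (normal_density 0 \<sigma> z * exp (lam * z\<^sup>2))"
      by (rule ennreal_mult[symmetric]) auto
    also have "\<dots> = ennreal (1 / sqrt r * normal_density 0 \<sigma>' z)" by (simp only: pw)
    also have "\<dots> = ennreal (1 / sqrt r) * ennreal (normal_density 0 \<sigma>' z)"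
      by (rule ennreal_mult) (use r in auto)
    finally show "ennreal (normal_density 0 \<sigma> z) * ennreal (exp (lam * z\<^sup>2)) = ennreal (1 / sqrt r) * ennreal (normal_density 0 \<sigma>' z)" .
  qed
  also have "\<dots> = ennreal (1 / sqrt r) * (\<integral>\<^sup>+z. ennreal (normal_density 0 \<sigma>' z) \<partial>lborel)"
    by (intro nn_integral_cmult) auto
  also have "\<dots> = ennreal (1 / sqrt r)"
    using r \<sigma> by (subst nn_integral_normal_density) (auto simp: \<sigma>'_def)
  also have "\<dots> \<le> ennreal (sqrt 2)"
  proof (intro ennreal_leI)
    have "sqrt (1/2) \<le> sqrt r" using r by simp
    then have "1 / sqrt r \<le> 1 / sqrt (1/2)" using r by (intro divide_left_mono) auto
    also have "1 / sqrt (1/2) = sqrt 2" by (simp add: real_sqrt_divide)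
    finally show "1 / sqrt r \<le> sqrt 2" .
  qed
  finally show ?thesis .
qed

lemma (in prob_space) nn_integral_exp_sq_gaussian_sum_le:
  fixes \<zeta> :: "'i \<Rightarrow> 'a \<Rightarrow> real"
  assumes F: "finite F" and ind: "indep_vars (\<lambda>_. borel) \<zeta> F"
    and dist: "\<And>i. i \<in> F \<Longrightarrow> distributed M lborel (\<zeta> i) std_normal_density"
    and sv: "sv > 0" "(\<Sum>i\<in>F. (a i)\<^sup>2) \<le> sv"
  shows "(\<integral>\<^sup>+\<omega>. ennreal (exp (1 / (4 * sv) * (\<Sum>i\<in>F. a i * \<zeta> i \<omega>)\<^sup>2)) \<partial>M) \<le> ennreal (sqrt 2)"
proof -
  \<comment> \<open>\<open>sum_indep_normal\<close> needs positive variances, so vanishing coefficients are dropped.\<close>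
  define F' where "F' = {i\<in>F. a i \<noteq> 0}"
  have F': "finite F'" "F' \<subseteq> F" unfolding F'_def using F by auto
  have sumeq: "(\<Sum>i\<in>F. a i * \<zeta> i \<omega>) = (\<Sum>i\<in>F'. a i * \<zeta> i \<omega>)" for \<omega>
    by (rule sum.mono_neutral_right[OF F F'(2)]) (auto simp: F'_def)
  show ?thesis
  proof (cases "F' = {}")
    case True
    then have "(\<integral>\<^sup>+\<omega>. ennreal (exp (1 / (4 * sv) * (\<Sum>i\<in>F. a i * \<zeta> i \<omega>)\<^sup>2)) \<partial>M) = (\<integral>\<^sup>+\<omega>. 1 \<partial>M)"
      by (intro nn_integral_cong) (simp add: sumeq)
    also have "\<dots> = 1" using emeasure_space_1 by simp
    also have "\<dots> \<le> ennreal (sqrt 2)" by simp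
    finally show ?thesis .
  next
    case False
    define \<sigma> where "\<sigma> = sqrt (\<Sum>i\<in>F'. (\<bar>a i\<bar> * 1)\<^sup>2)"
    have "(\<Sum>i\<in>F'. (\<bar>a i\<bar> * 1)\<^sup>2) > 0"
      using False F' by (intro sum_pos) (auto simp: F'_def)
    then have \<sigma>0: "\<sigma> > 0" unfolding \<sigma>_def by simp
    have "(\<Sum>i\<in>F'. (\<bar>a i\<bar> * 1)\<^sup>2) \<le> (\<Sum>i\<in>F. (a i)\<^sup>2)"
    proof -
      have "(\<Sum>i\<in>F'. (\<bar>a i\<bar> * 1)\<^sup>2) = (\<Sum>i\<in>F'. (a i)\<^sup>2)" by simp
      also have "\<dots> \<le> (\<Sum>i\<in>F. (a i)\<^sup>2)" using F F' by (intro sum_mono2) auto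
      finally show ?thesis .
    qed
    then have \<sigma>sv: "\<sigma>\<^sup>2 \<le> sv" unfolding \<sigma>_def using sv by (simp add: sum_nonneg)
    have d1: "distributed M lborel (\<lambda>\<omega>. 0 + a i * \<zeta> i \<omega>) (normal_density (0 + a i * 0) (\<bar>a i\<bar> * 1))"
      if "i \<in> F'" for i
      using that F' by (intro normal_density_affine dist) (auto simp: F'_def)
    have ind': "indep_vars (\<lambda>_. borel) (\<lambda>i \<omega>. a i * \<zeta> i \<omega>) F'"
      using indep_vars_compose2[OF indep_vars_subset[OF ind F'(2)], of "\<lambda>i x. a i * x" "\<lambda>_. borel"]
      by simp
    have Z: "distributed M lborel (\<lambda>\<omega>. \<Sum>i\<in>F'. a i * \<zeta> i \<omega>)
        (normal_density (\<Sum>i\<in>F'. 0) (sqrt (\<Sum>i\<in>F'. (\<bar>a i\<bar> * 1)\<^sup>2)))"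
      using d1 by (intro sum_indep_normal[OF F'(1) False ind']) (auto simp: F'_def)
    then have Z': "distributed M lborel (\<lambda>\<omega>. \<Sum>i\<in>F'. a i * \<zeta> i \<omega>) (normal_density 0 \<sigma>)"
      unfolding \<sigma>_def by simp
    have "(\<integral>\<^sup>+\<omega>. ennreal (exp (1 / (4 * sv) * (\<Sum>i\<in>F. a i * \<zeta> i \<omega>)\<^sup>2)) \<partial>M)
       = (\<integral>\<^sup>+\<omega>. ennreal (exp (1 / (4 * sv) * (\<Sum>i\<in>F'. a i * \<zeta> i \<omega>)\<^sup>2)) \<partial>M)"
      by (simp add: sumeq)
    also have "\<dots> = (\<integral>\<^sup>+z. ennreal (normal_density 0 \<sigma> z) * ennreal (exp (1 / (4 * sv) * z\<^sup>2)) \<partial>lborel)"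
      by (rule distributed_nn_integral[OF Z', symmetric]) simp
    also have "\<dots> \<le> ennreal (sqrt 2)"
    proof (rule nn_integral_normal_density_exp_sq_le[OF \<sigma>0])
      show "0 \<le> 1 / (4 * sv)" using sv by simp
      show "1 / (4 * sv) * \<sigma>\<^sup>2 \<le> 1 / 4" using \<sigma>sv sv by (simp add: field_simps)
    qed
    finally show ?thesis .
  qed
qed

(* Jensen's inequality, via the tangent line of exp at the mean. *)
lemma exp_integral_le_integral_exp:
  fixes f :: "real \<Rightarrow> real"
  assumes cf: "continuous_on {0..1} f" and lam: "lam \<ge> 0"
  shows "exp (lam * integral {0..1} f) \<le> integral {0..1} (\<lambda>x. exp (lam * f x))"
proof -
  define Q where "Q = integral {0..1} f"
  have fi: "(f has_integral Q) {0..1}" unfolding Q_def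
    using integrable_continuous_interval[OF cf] by (rule integrable_integral)
  have cg: "continuous_on {0..1} (\<lambda>x. exp (lam * f x))" by (intro continuous_intros cf)
  have gi: "((\<lambda>x. exp (lam * f x)) has_integral integral {0..1} (\<lambda>x. exp (lam * f x))) {0..1}"
    using integrable_continuous_interval[OF cg] by (rule integrable_integral)
  have h1: "((\<lambda>x. exp (lam * Q) * (1 - lam * Q)) has_integral (exp (lam * Q) * (1 - lam * Q))) {0..1::real}"
    by (rule has_integral_eq_rhs[OF has_integral_const_real]) simp
  have h2: "((\<lambda>x. (exp (lam * Q) * lam) * f x) has_integral ((exp (lam * Q) * lam) * Q)) {0..1}"
    by (rule has_integral_mult_right[OF fi])
  have h: "((\<lambda>x. exp (lam * Q) * (1 - lam * Q) + (exp (lam * Q) * lam) * f x) has_integral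
      (exp (lam * Q) * (1 - lam * Q) + (exp (lam * Q) * lam) * Q)) {0..1}"
    by (rule has_integral_add[OF h1 h2])
  have le: "exp (lam * Q) * (1 - lam * Q) + (exp (lam * Q) * lam) * f x \<le> exp (lam * f x)" for x
  proof -
    have "1 + (lam * f x - lam * Q) \<le> exp (lam * f x - lam * Q)" by (rule exp_ge_add_one_self)
    then have "exp (lam * Q) * (1 + (lam * f x - lam * Q)) \<le> exp (lam * Q) * exp (lam * f x - lam * Q)"
      by (intro mult_left_mono) auto
    also have "\<dots> = exp (lam * f x)" by (simp add: exp_add[symmetric])
    finally show ?thesis by (simp add: algebra_simps)
  qed
  have "exp (lam * Q) * (1 - lam * Q) + (exp (lam * Q) * lam) * Q \<le> integral {0..1} (\<lambda>x. exp (lam * f x))"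
    by (rule has_integral_le[OF h gi le])
  then show ?thesis unfolding Q_def[symmetric] by (simp add: algebra_simps)
qed

lemma exp_integral_sq_le_nn_integral:
  fixes g :: "real \<Rightarrow> real"
  assumes g: "continuous_on UNIV g" and lam: "lam \<ge> 0"
  shows "ennreal (exp (lam * integral {0..1} (\<lambda>x. (g x)\<^sup>2)))
    \<le> (\<integral>\<^sup>+x. ennreal (indicator {0..1} x * exp (lam * (g x)\<^sup>2)) \<partial>lborel)"
proof -
  have cg: "continuous_on UNIV (\<lambda>x. exp (lam * (g x)\<^sup>2))" by (intro continuous_intros g)
  have "((\<lambda>x. exp (lam * (g x)\<^sup>2)) has_integral integral {0..1} (\<lambda>x. exp (lam * (g x)\<^sup>2))) {0..1}"
    using integrable_continuous_interval[OF continuous_on_subset[OF cg]] by (intro integrable_integral) auto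
  moreover have "(\<lambda>x. indicator {0..1} x * exp (lam * (g x)\<^sup>2)) =
      (\<lambda>x. if x \<in> {0..1::real} then exp (lam * (g x)\<^sup>2) else 0)"
    by (auto simp: indicator_def)
  ultimately have "((\<lambda>x. indicator {0..1} x * exp (lam * (g x)\<^sup>2)) has_integral
      integral {0..1} (\<lambda>x. exp (lam * (g x)\<^sup>2))) UNIV"
    by (simp only: has_integral_restrict_UNIV)
  then have "(\<integral>\<^sup>+x. ennreal (indicator {0..1} x * exp (lam * (g x)\<^sup>2)) \<partial>lborel)
      = integral {0..1} (\<lambda>x. exp (lam * (g x)\<^sup>2))"
    by (intro nn_integral_has_integral_lborel borel_measurable_times borel_measurable_indicator
        borel_measurable_continuous_onI[OF cg]) auto
  moreover have "continuous_on {0..1} (\<lambda>x. (g x)\<^sup>2)"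
    using g by (intro continuous_intros) (auto intro: continuous_on_subset)
  note exp_integral_le_integral_exp[OF this lam]
  ultimately show ?thesis by (simp add: ennreal_leI)
qed

lemma (in prob_space) nn_integral_exp_sq_gaussian_field_le:
  fixes \<zeta> :: "'i \<Rightarrow> 'a \<Rightarrow> real" and \<phi> :: "'i \<Rightarrow> real \<Rightarrow> real"
  assumes F: "finite F" and ind: "indep_vars (\<lambda>_. borel) \<zeta> F"
    and dist: "\<And>i. i \<in> F \<Longrightarrow> distributed M lborel (\<zeta> i) std_normal_density"
    and cont: "\<And>i. i \<in> F \<Longrightarrow> continuous_on UNIV (\<phi> i)"
    and sv: "sv > 0" "\<And>x. (\<Sum>i\<in>F. (c i * \<phi> i x)\<^sup>2) \<le> sv"
  shows "(\<integral>\<^sup>+\<omega>. \<integral>\<^sup>+x. ennreal (indicator {0..1} x *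
      exp (1 / (4 * sv) * (\<Sum>i\<in>F. c i * \<zeta> i \<omega> * \<phi> i x)\<^sup>2)) \<partial>lborel \<partial>M) \<le> ennreal (sqrt 2)"
proof -
  define H where "H \<omega> x = ennreal (indicator {0..1} x * exp (1 / (4 * sv) * (\<Sum>i\<in>F. c i * \<zeta> i \<omega> * \<phi> i x)\<^sup>2))"
    for \<omega> x
  have [measurable]: "\<zeta> i \<in> borel_measurable M" if "i \<in> F" for i
    using distributed_measurable[OF dist[OF that]] by simp
  have [measurable]: "\<phi> i \<in> borel_measurable borel" if "i \<in> F" for i
    using cont[OF that] by (rule borel_measurable_continuous_onI)
  have H: "case_prod H \<in> borel_measurable (M \<Otimes>\<^sub>M lborel)"
    unfolding H_def case_prod_beta by measurable
  interpret pair_sigma_finite M lborel ..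
  have inner: "(\<integral>\<^sup>+\<omega>. H \<omega> x \<partial>M) \<le> ennreal (sqrt 2) * indicator {0..1} x" for x
  proof (cases "x \<in> {0..1}")
    case True
    have "(\<integral>\<^sup>+\<omega>. H \<omega> x \<partial>M)
        = (\<integral>\<^sup>+\<omega>. ennreal (exp (1 / (4 * sv) * (\<Sum>i\<in>F. (c i * \<phi> i x) * \<zeta> i \<omega>)\<^sup>2)) \<partial>M)"
      unfolding H_def using True by (intro nn_integral_cong) (simp add: mult_ac)
    also have "\<dots> \<le> ennreal (sqrt 2)"
      by (rule nn_integral_exp_sq_gaussian_sum_le[OF F ind dist sv(1) sv(2)])
    finally show ?thesis using True by simp
  qed (simp add: H_def)
  have "(\<integral>\<^sup>+\<omega>. \<integral>\<^sup>+x. H \<omega> x \<partial>lborel \<partial>M) = (\<integral>\<^sup>+x. \<integral>\<^sup>+\<omega>. H \<omega> x \<partial>M \<partial>lborel)"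
    by (rule Fubini'[OF H, symmetric])
  also have "\<dots> \<le> (\<integral>\<^sup>+x. ennreal (sqrt 2) * indicator {0..1::real} x \<partial>lborel)"
    by (rule nn_integral_mono) (rule inner)
  also have "\<dots> = ennreal (sqrt 2)" by (subst nn_integral_cmult_indicator) auto
  finally show ?thesis unfolding H_def .
qed

(* Markov's inequality without measurability of E: a non-measurable set has measure 0. *)
lemma (in prob_space) measure_le_of_nn_integral_bound:
  assumes a: "a > 0" and b: "b \<ge> 0"
    and G: "\<And>\<omega>. \<omega> \<in> space M \<Longrightarrow> \<omega> \<in> E \<Longrightarrow> ennreal a \<le> G \<omega>"
    and int: "(\<integral>\<^sup>+\<omega>. G \<omega> \<partial>M) \<le> ennreal b"
  shows "measure M E \<le> b / a"
proof (cases "E \<in> sets M")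
  case True
  have "ennreal (a * measure M E) = ennreal a * emeasure M E"
    using a by (simp add: emeasure_eq_measure ennreal_mult)
  also have "\<dots> = (\<integral>\<^sup>+\<omega>. ennreal a * indicator E \<omega> \<partial>M)"
    by (rule nn_integral_cmult_indicator[OF True, symmetric])
  also have "\<dots> \<le> (\<integral>\<^sup>+\<omega>. G \<omega> \<partial>M)"
    using G by (intro nn_integral_mono) (auto split: split_indicator)
  finally have "a * measure M E \<le> b"
    using int b by (simp add: ennreal_le_iff[symmetric] del: ennreal_le_iff)
  then show ?thesis using a by (simp add: field_simps)
qed (use a b in \<open>simp add: measure_notin_sets\<close>)

lemma (in prob_space) gaussian_field_L2_tail:
  fixes \<zeta> :: "'i \<Rightarrow> 'a \<Rightarrow> real" and \<phi> :: "'i \<Rightarrow> real \<Rightarrow> real"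
  assumes F: "finite F" and ind: "indep_vars (\<lambda>_. borel) \<zeta> F"
    and dist: "\<And>i. i \<in> F \<Longrightarrow> distributed M lborel (\<zeta> i) std_normal_density"
    and cont: "\<And>i. i \<in> F \<Longrightarrow> continuous_on UNIV (\<phi> i)"
    and sv: "sv > 0" "\<And>x. (\<Sum>i\<in>F. (c i * \<phi> i x)\<^sup>2) \<le> sv"
    and \<delta>: "\<delta> > 0"
  shows "measure M {\<omega> \<in> space M. sqrt (integral {0..1} (\<lambda>x. (\<Sum>i\<in>F. c i * \<zeta> i \<omega> * \<phi> i x)\<^sup>2)) > \<delta>}
     \<le> sqrt 2 * exp (- (\<delta>\<^sup>2 / (4 * sv)))"
proof -
  define lam where "lam = 1 / (4 * sv)"
  have lam: "lam > 0" unfolding lam_def using sv(1) by simp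
  define Y where "Y \<omega> x = (\<Sum>i\<in>F. c i * \<zeta> i \<omega> * \<phi> i x)" for \<omega> x
  define G where "G \<omega> = (\<integral>\<^sup>+x. ennreal (indicator {0..1} x * exp (lam * (Y \<omega> x)\<^sup>2)) \<partial>lborel)" for \<omega>
  have "ennreal (exp (lam * \<delta>\<^sup>2)) \<le> G \<omega>"
    if "sqrt (integral {0..1} (\<lambda>x. (Y \<omega> x)\<^sup>2)) > \<delta>" for \<omega>
  proof -
    have "sqrt (\<delta>\<^sup>2) < sqrt (integral {0..1} (\<lambda>x. (Y \<omega> x)\<^sup>2))"
      using that \<delta> by simp
    then have "\<delta>\<^sup>2 < integral {0..1} (\<lambda>x. (Y \<omega> x)\<^sup>2)"
      by (simp only: real_sqrt_less_iff)
    then have "ennreal (exp (lam * \<delta>\<^sup>2)) \<le> ennreal (exp (lam * integral {0..1} (\<lambda>x. (Y \<omega> x)\<^sup>2)))"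
      using lam by (intro ennreal_leI) simp
    also have "\<dots> \<le> G \<omega>"
      unfolding G_def Y_def using lam
      by (intro exp_integral_sq_le_nn_integral continuous_on_sum continuous_intros cont) auto
    finally show ?thesis .
  qed
  moreover have "(\<integral>\<^sup>+\<omega>. G \<omega> \<partial>M) \<le> ennreal (sqrt 2)"
    using nn_integral_exp_sq_gaussian_field_le[OF F ind dist cont sv] unfolding G_def Y_def lam_def .
  ultimately have "measure M {\<omega> \<in> space M. sqrt (integral {0..1} (\<lambda>x. (Y \<omega> x)\<^sup>2)) > \<delta>}
      \<le> sqrt 2 / exp (lam * \<delta>\<^sup>2)"
    by (intro measure_le_of_nn_integral_bound) auto
  then show ?thesis unfolding Y_def lam_def by (simp add: exp_minus field_simps)
qed

lemma derivn_S_fun: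
  assumes V: "smooth_real V" and eta: "\<eta> \<noteq> 0" and h: "h \<noteq> 0"
  shows "(deriv ^^ l) (S_fun \<eta> V h N z) =
    (\<lambda>x. \<Sum>(m, j)\<in>{1..M_of h} \<times> {1..N}. z m j * (deriv ^^ l) (D_fun \<eta> V h m j) x)"
proof -
  have "S_fun \<eta> V h N z = (\<lambda>x. \<Sum>(m, j)\<in>{1..M_of h} \<times> {1..N}. z m j * D_fun \<eta> V h m j x)"
    unfolding S_fun_def by (simp add: sum.cartesian_product)
  then show ?thesis
    by (simp add: case_prod_beta derivn_sum derivn_cmult smooth_real_cmult smooth_real_D_fun V eta h)
qed

lemma (in prob_space) S_fun_derivn_L2_tail:
  assumes ind: "indep_vars (\<lambda>_. borel) (\<lambda>(m, j). \<zeta> m j) UNIV"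
    and dist: "\<And>m j. distributed M lborel (\<zeta> m j) std_normal_density"
    and V: "smooth_real V" and eta: "\<eta> \<noteq> 0" and h: "h \<noteq> 0" and sv: "sv > 0" and \<delta>: "\<delta> > 0"
    and var: "\<And>x. (\<Sum>(m, j)\<in>{1..M_of h} \<times> {1..N}. (t m j * (deriv ^^ l) (D_fun \<eta> V h m j) x)\<^sup>2) \<le> sv"
  shows "measure M {\<omega> \<in> space M.
      L2norm01 ((deriv ^^ l) (S_fun \<eta> V h N (\<lambda>m j. t m j * \<zeta> m j \<omega>))) > \<delta>}
    \<le> sqrt 2 * exp (- (\<delta>\<^sup>2 / (4 * sv)))"
proof -
  have "indep_vars (\<lambda>_. borel) (\<lambda>(m, j). \<zeta> m j) ({1..M_of h} \<times> {1..N})"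
    using indep_vars_subset[OF ind subset_UNIV] .
  from gaussian_field_L2_tail[OF _ this _ _ sv _ \<delta>, where c="\<lambda>(m, j). t m j"
      and \<phi>="\<lambda>(m, j). (deriv ^^ l) (D_fun \<eta> V h m j)"]
  show ?thesis
    using var dist
    by (simp add: L2norm01_def derivn_S_fun V eta h case_prod_beta mult_ac smooth_real_continuous_on
        smooth_real_D_fun)
qed

lemma D_fun_variance_le:
  assumes C: "\<And>m j x. 1 \<le> j \<Longrightarrow>
      ((deriv ^^ l) (D_fun \<eta> V h m j) x)\<^sup>2 \<le> C * (real j ^ (2 * (k - 1)) / h ^ (2 * k - 1))"
  shows "(\<Sum>(m, j)\<in>{1..M} \<times> {1..N}. (t m j * (deriv ^^ l) (D_fun \<eta> V h m j) x)\<^sup>2)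
    \<le> C / h ^ (2 * k - 1) * (\<Sum>m=1..M. \<Sum>j=1..N. (t m j)\<^sup>2 * real j ^ (2 * (k - 1)))"
proof -
  have "(t m j * (deriv ^^ l) (D_fun \<eta> V h m j) x)\<^sup>2
      \<le> (t m j)\<^sup>2 * (C * (real j ^ (2 * (k - 1)) / h ^ (2 * k - 1)))" if "1 \<le> j" for m j
    using mult_left_mono[OF C[OF that], of "(t m j)\<^sup>2"] by (simp add: power_mult_distrib)
  then have "(\<Sum>(m, j)\<in>{1..M} \<times> {1..N}. (t m j * (deriv ^^ l) (D_fun \<eta> V h m j) x)\<^sup>2)
      \<le> (\<Sum>(m, j)\<in>{1..M} \<times> {1..N}. (t m j)\<^sup>2 * (C * (real j ^ (2 * (k - 1)) / h ^ (2 * k - 1))))"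
    by (intro sum_mono) auto
  also have "\<dots> = C / h ^ (2 * k - 1) * (\<Sum>m=1..M. \<Sum>j=1..N. (t m j)\<^sup>2 * real j ^ (2 * (k - 1)))"
    by (simp add: sum.cartesian_product[symmetric] sum_distrib_left mult_ac)
  finally show ?thesis .
qed

lemma (in prob_space) S_fun_derivn_tail_uniform:
  assumes ind: "indep_vars (\<lambda>_. borel) (\<lambda>(m, j). \<zeta> m j) UNIV"
    and dist: "\<And>m j. distributed M lborel (\<zeta> m j) std_normal_density"
    and V: "smooth_real V" "\<And>u. \<bar>u\<bar> \<ge> 1 \<Longrightarrow> V u = 0" and eta: "\<eta> > 0"
  obtains C where "C \<ge> 0"
    "\<And>h N t l \<delta> s. 0 < h \<Longrightarrow> h \<le> 1 \<Longrightarrow> l < k \<Longrightarrow> \<delta> > 0 \<Longrightarrow> s > 0 \<Longrightarrow>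
      C / h ^ (2 * k - 1) * (\<Sum>m=1..M_of h. \<Sum>j=1..N. (t m j)\<^sup>2 * real j ^ (2 * (k - 1))) \<le> s \<Longrightarrow>
      measure M {\<omega> \<in> space M. L2norm01 ((deriv ^^ l) (S_fun \<eta> V h N (\<lambda>m j. t m j * \<zeta> m j \<omega>))) > \<delta>}
        \<le> sqrt 2 * exp (- (\<delta>\<^sup>2 / (4 * s)))"
proof -
  obtain C where C0: "C \<ge> 0" and C: "\<And>h m j l x. 0 < h \<Longrightarrow> h \<le> 1 \<Longrightarrow> 1 \<le> j \<Longrightarrow> l < k \<Longrightarrow>
      ((deriv ^^ l) (D_fun \<eta> V h m j) x)\<^sup>2 \<le> C * (real j ^ (2 * (k - 1)) / h ^ (2 * k - 1))"
    using derivn_D_fun_sq_bound[OF V eta] by blast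
  have "measure M {\<omega> \<in> space M. L2norm01 ((deriv ^^ l) (S_fun \<eta> V h N (\<lambda>m j. t m j * \<zeta> m j \<omega>))) > \<delta>}
      \<le> sqrt 2 * exp (- (\<delta>\<^sup>2 / (4 * s)))"
    if h: "0 < h" "h \<le> 1" and l: "l < k" and \<delta>: "\<delta> > 0" and s: "s > 0"
      and proxy: "C / h ^ (2 * k - 1) * (\<Sum>m=1..M_of h. \<Sum>j=1..N. (t m j)\<^sup>2 * real j ^ (2 * (k - 1))) \<le> s"
    for h N t l \<delta> s
  proof (rule S_fun_derivn_L2_tail[OF ind dist V(1) _ _ s \<delta>])
    fix x
    have "(\<Sum>(m, j)\<in>{1..M_of h} \<times> {1..N}. (t m j * (deriv ^^ l) (D_fun \<eta> V h m j) x)\<^sup>2)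
        \<le> C / h ^ (2 * k - 1) * (\<Sum>m=1..M_of h. \<Sum>j=1..N. (t m j)\<^sup>2 * real j ^ (2 * (k - 1)))"
      by (rule D_fun_variance_le) (use C h l in blast)
    with proxy show "(\<Sum>(m, j)\<in>{1..M_of h} \<times> {1..N}. (t m j * (deriv ^^ l) (D_fun \<eta> V h m j) x)\<^sup>2) \<le> s"
      by linarith
  qed (use h eta in auto)
  with C0 show thesis by (rule that)
qed

lemma bigo_tendsto_zero:
  fixes f g :: "'a \<Rightarrow> real"
  assumes "f \<in> O[F](g)" and "(g \<longlongrightarrow> 0) F"
  shows "(f \<longlongrightarrow> 0) F"
proof -
  obtain c where "eventually (\<lambda>x. norm (f x) \<le> c * norm (g x)) F"
    using assms(1) by (elim landau_o.bigE)
  then have "eventually (\<lambda>x. norm (f x) \<le> norm (g x) * c) F"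
    by (rule eventually_mono) (simp add: mult.commute)
  then show ?thesis by (rule tendsto_0_le[OF assms(2)])
qed

lemma powr_mult_tail_tendsto_zero:
  fixes f s d :: "nat \<Rightarrow> real"
  assumes lim: "(\<lambda>n. real n powr p * exp (- d n / 2)) \<longlonglongrightarrow> 0"
    and ds: "(\<lambda>n. d n * s n) \<longlonglongrightarrow> 0" and s: "\<And>n. s n > 0" and \<delta>: "\<delta> > 0" and c: "c \<ge> 0"
    and f: "eventually (\<lambda>n. 0 \<le> f n \<and> f n \<le> c * exp (- (\<delta>\<^sup>2 / (4 * s n)))) sequentially"
  shows "(\<lambda>n. real n powr p * f n) \<longlonglongrightarrow> 0"
proof -
  have "eventually (\<lambda>n. d n * s n < \<delta>\<^sup>2 / 2) sequentially"
    using ds \<delta> by (intro order_tendstoD) auto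
  with f have ev: "eventually (\<lambda>n. 0 \<le> real n powr p * f n \<and>
      real n powr p * f n \<le> c * (real n powr p * exp (- d n / 2))) sequentially"
  proof eventually_elim
    case (elim n)
    have "d n / 2 \<le> \<delta>\<^sup>2 / (4 * s n)"
      using elim(2) s[of n] by (simp add: field_simps)
    then have "exp (- (\<delta>\<^sup>2 / (4 * s n))) \<le> exp (- d n / 2)" by simp
    then have "f n \<le> c * exp (- d n / 2)"
      using elim(1) c by (meson mult_left_mono order_trans)
    then have "real n powr p * f n \<le> real n powr p * (c * exp (- d n / 2))"
      by (rule mult_left_mono) simp
    then show ?case
      using elim(1) by (simp add: mult.left_commute)
  qed
  show ?thesis
  proof (rule tendsto_sandwich[OF _ _ tendsto_const tendsto_mult_right_zero[OF lim]])
    show "eventually (\<lambda>n. 0 \<le> real n powr p * f n) sequentially"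
      using ev by (rule eventually_mono) simp
    show "eventually (\<lambda>n. real n powr p * f n \<le> c * (real n powr p * exp (- d n / 2))) sequentially"
      using ev by (rule eventually_mono) simp
  qed
qed

lemma variance_proxy_exists:
  fixes d T :: "nat \<Rightarrow> real"
  assumes d: "\<And>n. d n > 0" and T: "\<And>n. T n \<ge> 0" "T \<longlonglongrightarrow> 0"
  obtains s where "\<And>n. s n > 0" "(\<lambda>n. d n * s n) \<longlonglongrightarrow> 0" "\<And>n. T n / d n \<le> s n"
proof
  \<comment> \<open>The summand \<open>1 / (n + 1)\<close> keeps \<open>s\<close> positive where \<open>T\<close> vanishes.\<close>
  define s where "s n = (T n + 1 / (real n + 1)) / d n" for n
  show "s n > 0" for n unfolding s_def using d[of n] T(1)[of n] by (simp add: add_nonneg_pos)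
  show "T n / d n \<le> s n" for n unfolding s_def using d[of n] by (simp add: divide_right_mono)
  have "(\<lambda>n. T n + 1 / (real n + 1)) \<longlonglongrightarrow> 0 + 0"
    using T(2) LIMSEQ_Suc[OF lim_inverse_n'] by (intro tendsto_add) (simp_all add: add.commute)
  moreover have "d n * s n = T n + 1 / (real n + 1)" for n unfolding s_def using d[of n] by simp
  ultimately show "(\<lambda>n. d n * s n) \<longlonglongrightarrow> 0" by simp
qed

lemma Max_image_nonneg_le:
  fixes f :: "'a \<Rightarrow> real"
  assumes "finite A" "A \<noteq> {}" and "\<And>a. a \<in> A \<Longrightarrow> 0 \<le> f a \<and> f a \<le> b"
  shows "0 \<le> Max (f ` A) \<and> Max (f ` A) \<le> b"
proof -
  obtain a where "a \<in> A" using assms(2) by blast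
  then have "f a \<le> Max (f ` A)" using assms(1) by (intro Max_ge) auto
  moreover have "Max (f ` A) \<le> b" using assms by (simp add: Max_le_iff)
  ultimately show ?thesis using assms(3)[OF \<open>a \<in> A\<close>] by linarith
qed

theorem proposition7p1:
  fixes k :: nat and \<eta> :: real and V :: "real \<Rightarrow> real"
    and h :: "nat \<Rightarrow> real" and N :: "nat \<Rightarrow> nat" and d :: "nat \<Rightarrow> real"
    and t :: "nat \<Rightarrow> nat \<Rightarrow> nat \<Rightarrow> real"
    and M :: "'a measure" and \<zeta> :: "nat \<Rightarrow> nat \<Rightarrow> 'a \<Rightarrow> real"
  assumes k: "k \<ge> 1"
    and eta: "\<eta> > 0"
    and V_smooth: "smooth_real V"
    and V_supp: "\<And>u. \<bar>u\<bar> \<ge> 1 \<Longrightarrow> V u = 0"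
    and V_int: "integral {-1..1} V = 1"
    and h_pos: "\<And>n. h n > 0"
    and t_pos: "\<And>n m j. 1 \<le> m \<Longrightarrow> m \<le> M_of (h n) \<Longrightarrow> 1 \<le> j \<Longrightarrow> j \<le> N n \<Longrightarrow> t n m j > 0"
    and P: "prob_space M"
    and zeta_indep: "prob_space.indep_vars M (\<lambda>_. borel) (\<lambda>(m, j). \<zeta> m j) UNIV"
    and zeta_distr: "\<And>m j. distributed M lborel (\<zeta> m j) std_normal_density"
    \<comment> \<open>A1\<close>
    and A1_N: "filterlim N at_top sequentially"
    and A1_Np: "\<And>p::real. p > 0 \<Longrightarrow> (\<lambda>n. real (N n) powr p / real n) \<longlonglongrightarrow> 0"
    and A1_delta: "\<exists>\<delta>1 \<delta>2::real. 0 < \<delta>1 \<and> \<delta>1 < 1 \<and> \<delta>2 > 0 \<and>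
                     h \<in> O(\<lambda>n. real n powr (- \<delta>1)) \<and> (\<lambda>n. 1 / h n) \<in> O(\<lambda>n. real n powr \<delta>2)"
    \<comment> \<open>A2\<close>
    and d_pos: "\<And>n. d n > 0"
    and A2_1: "(\<lambda>n. d n / h n ^ (2 * k - 1) *
                 (\<Sum>m=1..M_of (h n). \<Sum>j=1..N n. (t n m j)^2 * real j ^ (2 * (k - 1)))) \<longlonglongrightarrow> 0"
    and A2_2: "(\<lambda>n. sqrt (d n) * t_star (M_of (h n)) (N n) (t n)) \<longlonglongrightarrow> 0"
    and A2_3: "\<And>p::real. p > 0 \<Longrightarrow> (\<lambda>n. real n powr p * exp (- d n / 2)) \<longlonglongrightarrow> 0"
  shows "\<forall>p::real. \<forall>\<delta>::real. p > 0 \<longrightarrow> \<delta> > 0 \<longrightarrow>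
     (\<lambda>n. real n powr p *
        Max ((\<lambda>l. measure M {\<omega> \<in> space M.
               L2norm01 ((deriv ^^ l) (S_fun \<eta> V (h n) (N n) (\<lambda>m j. t n m j * \<zeta> m j \<omega>))) > \<delta>})
             ` {0..k-1})) \<longlonglongrightarrow> 0"
  \<comment> \<open>The Gaussian tail bound only uses the variance proxy.\<close>
proof (intro allI impI)
  fix p \<delta> :: real assume p: "p > 0" and \<delta>: "\<delta> > 0"
  interpret prob_space M by (rule P)
  obtain C where C0: "C \<ge> 0" and tail: "\<And>h N t l \<delta> s. 0 < h \<Longrightarrow> h \<le> 1 \<Longrightarrow> l < k \<Longrightarrow> \<delta> > 0 \<Longrightarrow>
      s > 0 \<Longrightarrow> C / h ^ (2 * k - 1) * (\<Sum>m=1..M_of h. \<Sum>j=1..N. (t m j)\<^sup>2 * real j ^ (2 * (k - 1))) \<le> s \<Longrightarrow>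
      measure M {\<omega> \<in> space M. L2norm01 ((deriv ^^ l) (S_fun \<eta> V h N (\<lambda>m j. t m j * \<zeta> m j \<omega>))) > \<delta>}
        \<le> sqrt 2 * exp (- (\<delta>\<^sup>2 / (4 * s)))"
    using S_fun_derivn_tail_uniform[OF zeta_indep zeta_distr V_smooth V_supp eta] by blast
  define A where "A n = (\<Sum>m=1..M_of (h n). \<Sum>j=1..N n. (t n m j)\<^sup>2 * real j ^ (2 * (k - 1)))" for n
  have "C * (d n / h n ^ (2 * k - 1) * A n) \<ge> 0" for n
    unfolding A_def using C0 d_pos[of n] h_pos[of n]
    by (intro mult_nonneg_nonneg divide_nonneg_pos sum_nonneg) auto
  moreover have "(\<lambda>n. C * (d n / h n ^ (2 * k - 1) * A n)) \<longlonglongrightarrow> 0"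
    using A2_1 unfolding A_def by (rule tendsto_mult_right_zero)
  ultimately obtain s where s_pos: "\<And>n. s n > 0" and ds: "(\<lambda>n. d n * s n) \<longlonglongrightarrow> 0"
    and s: "\<And>n. C * (d n / h n ^ (2 * k - 1) * A n) / d n \<le> s n"
    by (rule variance_proxy_exists[where d=d, OF d_pos]) blast
  obtain \<delta>1 where \<delta>1: "\<delta>1 > 0" "h \<in> O(\<lambda>n. real n powr (- \<delta>1))" using A1_delta by blast
  have "(\<lambda>n. real n powr (- \<delta>1)) \<longlonglongrightarrow> 0"
    using \<delta>1(1) by (intro tendsto_neg_powr filterlim_real_sequentially) auto
  with \<delta>1(2) have "h \<longlonglongrightarrow> 0" by (rule bigo_tendsto_zero)
  then have h_small: "eventually (\<lambda>n. h n < 1) sequentially" by (rule order_tendstoD) simp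
  let ?P = "\<lambda>n. Max ((\<lambda>l. measure M {\<omega> \<in> space M.
      L2norm01 ((deriv ^^ l) (S_fun \<eta> V (h n) (N n) (\<lambda>m j. t n m j * \<zeta> m j \<omega>))) > \<delta>}) ` {0..k-1})"
  from h_small have "eventually (\<lambda>n. 0 \<le> ?P n \<and> ?P n \<le> sqrt 2 * exp (- (\<delta>\<^sup>2 / (4 * s n)))) sequentially"
  proof eventually_elim
    case (elim n)
    have "C / h n ^ (2 * k - 1) * A n \<le> s n" using s[of n] d_pos[of n] by simp
    then show ?case
      using elim k h_pos[of n] s_pos[of n] \<delta> unfolding A_def
      by (intro Max_image_nonneg_le) (auto intro!: tail)
  qed
  from powr_mult_tail_tendsto_zero[OF A2_3[OF p] ds s_pos \<delta> _ this]
  show "(\<lambda>n. real n powr p * ?P n) \<longlonglongrightarrow> 0" by simp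
qed

end
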